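(* In the reduction instance $NTP([a_j]_{j\in A},W)$, every feasible schedule $S$ satisfies $B(S)=\sum_{k\in A}b_{i_k}$, i.e. all potential bumps are caused by critical employees.
   Context: Reduction instance. Let $N\ge1$, $A=\{1,\dots,N\}$, positive integers $a_1,\dots,a_N$, positive integer $W\le\sum_{j\in A}a_j$. Set $M=N+\sum_{j\in A}a_j+1$, employees $\mathcal E=\{1,\dots,M\}$ (smaller index = more senior). For $k\in A$: $i_k=k+\sum_{j=1}^{k-1}a_j$ (critical employees), $\mathcal E^S_k=\{i: i_k<i\le i_k+a_k\}$ (stable block), $\mathcal E^S=\bigcup_k\mathcal E^S_k$. Response delays: $r_{i_k}=\sum_{j=1}^{k}a_j$; for $i\in\mathcal E^S_k$, $r_i=\sum_{j=1}^{k-1}a_j$; $r_M=\sum_{j\in A}a_j$. Let $C^*_0=2\sum_j a_j$ and $H=C^*_0-W$. A schedule $S=(s_i,e_i)_{i\in\mathcal E}$ has $s_i\ge0$, $e_i=s_i+r_i$; it is feasible if $s_1\le\dots\le s_M$ and $e_i\le H$ for all $i$. $b_i=|\{j: i<j,\ e_j<e_i\}|$, $B(S)=\sum_i b_i$. *)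

theory Defs
  imports Complex_Main
begin

definition total :: "nat \<Rightarrow> (nat \<Rightarrow> nat) \<Rightarrow> nat" where
  "total N a = (\<Sum>j=1..N. a j)"

definition nemp :: "nat \<Rightarrow> (nat \<Rightarrow> nat) \<Rightarrow> nat" where
  "nemp N a = N + total N a + 1"

definition crit :: "(nat \<Rightarrow> nat) \<Rightarrow> nat \<Rightarrow> nat" where
  "crit a k = k + (\<Sum>j=1..<k. a j)"

definition stable_block :: "(nat \<Rightarrow> nat) \<Rightarrow> nat \<Rightarrow> nat set" where
  "stable_block a k = {i. crit a k < i \<and> i \<le> crit a k + a k}"

definition resp :: "nat \<Rightarrow> (nat \<Rightarrow> nat) \<Rightarrow> nat \<Rightarrow> nat" where
  "resp N a i =
    (if i = nemp N a then total N a
     else if \<exists>k\<in>{1..N}. i = crit a k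
       then (\<Sum>j=1..(THE k. k \<in> {1..N} \<and> i = crit a k). a j)
     else (\<Sum>j=1..<(THE k. k \<in> {1..N} \<and> i \<in> stable_block a k). a j))"

definition horizon :: "nat \<Rightarrow> (nat \<Rightarrow> nat) \<Rightarrow> nat \<Rightarrow> real" where
  "horizon N a W = real (2 * total N a) - real W"

definition etime :: "nat \<Rightarrow> (nat \<Rightarrow> nat) \<Rightarrow> (nat \<Rightarrow> real) \<Rightarrow> nat \<Rightarrow> real" where
  "etime N a s i = s i + real (resp N a i)"

definition feasible :: "nat \<Rightarrow> (nat \<Rightarrow> nat) \<Rightarrow> nat \<Rightarrow> (nat \<Rightarrow> real) \<Rightarrow> bool" where
  "feasible N a W s \<longleftrightarrow>
     (\<forall>i\<in>{1..nemp N a}. 0 \<le> s i) \<and>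
     (\<forall>i\<in>{1..nemp N a}. \<forall>j\<in>{1..nemp N a}. i \<le> j \<longrightarrow> s i \<le> s j) \<and>
     (\<forall>i\<in>{1..nemp N a}. etime N a s i \<le> horizon N a W)"

definition bumps :: "nat \<Rightarrow> (nat \<Rightarrow> nat) \<Rightarrow> (nat \<Rightarrow> real) \<Rightarrow> nat \<Rightarrow> nat" where
  "bumps N a s i = card {j\<in>{1..nemp N a}. i < j \<and> etime N a s j < etime N a s i}"

definition total_bumps :: "nat \<Rightarrow> (nat \<Rightarrow> nat) \<Rightarrow> (nat \<Rightarrow> real) \<Rightarrow> nat" where
  "total_bumps N a s = (\<Sum>i=1..nemp N a. bumps N a s i)"

end

theory Submission
  imports Defs
begin

text \<open>Employees are numbered so that each critical employee i_k is followed by its stable block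
  and the blocks tile {1..M-1}. The delay of a stable employee of block k is a_1 + ... + a_(k-1),
  which is at most the delay of every later employee; since start times are non-decreasing, no later
  employee finishes before a stable employee (nor before the last one), so only critical employees
  can cause bumps.\<close>

lemma crit_Suc: "1 \<le> k \<Longrightarrow> crit a (Suc k) = crit a k + 1 + a k"
  unfolding crit_def by simp

lemma crit_block_less_crit: "1 \<le> k \<Longrightarrow> k < k' \<Longrightarrow> crit a k + a k < crit a k'"
proof (induction k')
  case 0
  then show ?case by simp
next
  case (Suc m)
  then show ?case
    using crit_Suc[of k a] crit_Suc[of m a] by (cases "k = m") auto
qed

lemma crit_mono: "1 \<le> k \<Longrightarrow> k \<le> k' \<Longrightarrow> crit a k \<le> crit a k'"
  using crit_block_less_crit[of k k' a] by (cases "k = k'") auto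

lemma inj_on_crit: "inj_on (crit a) {1..N}"
proof (rule inj_onI)
  fix x y assume "x \<in> {1..N}" "y \<in> {1..N}" "crit a x = crit a y"
  then show "x = y" using crit_block_less_crit[of x y a] crit_block_less_crit[of y x a]
    by (cases x y rule: linorder_cases) auto
qed

lemma crit_ge: "k \<le> crit a k"
  unfolding crit_def by simp

lemma crit_last_block: "1 \<le> N \<Longrightarrow> crit a N + a N + 1 = nemp N a"
  unfolding crit_def nemp_def total_def
  by (simp add: sum.atLeastLessThan_Suc atLeastLessThanSuc_atLeastAtMost[symmetric]
      del: atLeastLessThanSuc_atLeastAtMost)

lemma crit_less_nemp: "k \<in> {1..N} \<Longrightarrow> crit a k < nemp N a"
  using crit_mono[of k N a] crit_last_block[of N a] by auto

lemma stable_block_less_nemp: "k \<in> {1..N} \<Longrightarrow> i \<in> stable_block a k \<Longrightarrow> i < nemp N a"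
  using crit_block_less_crit[of k N a] crit_last_block[of N a] unfolding stable_block_def
  by (cases "k = N") auto

lemma stable_block_not_crit:
  "1 \<le> k \<Longrightarrow> 1 \<le> k' \<Longrightarrow> i \<in> stable_block a k \<Longrightarrow> i \<noteq> crit a k'"
  using crit_mono[of k' k a] crit_block_less_crit[of k k' a] unfolding stable_block_def
  by (cases "k' \<le> k") auto

lemma stable_block_unique:
  "1 \<le> p \<Longrightarrow> 1 \<le> q \<Longrightarrow> i \<in> stable_block a p \<Longrightarrow> i \<in> stable_block a q \<Longrightarrow> p = q"
  using crit_block_less_crit[of p q a] crit_block_less_crit[of q p a] unfolding stable_block_def
  by (cases p q rule: linorder_cases) auto

lemma in_stable_block_if_not_crit:
  assumes "1 \<le> N" "1 \<le> i" "i < nemp N a" "i \<notin> crit a ` {1..N}"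
  shows "\<exists>k\<in>{1..N}. i \<in> stable_block a k"
proof -
  define S where "S = {k\<in>{1..N}. crit a k \<le> i}"
  define K where "K = Max S"
  have "finite S" "1 \<in> S"
    using assms unfolding S_def crit_def by auto
  then have "K \<in> S" and "\<And>k. k \<in> S \<Longrightarrow> k \<le> K"
    unfolding K_def using Max_in Max_ge by auto
  then have K: "K \<in> {1..N}" "crit a K \<le> i"
    and K_max: "\<And>k. k \<in> {1..N} \<Longrightarrow> crit a k \<le> i \<Longrightarrow> k \<le> K"
    unfolding S_def by auto
  have "crit a K < i"
    using K assms(4) by (metis image_eqI le_neq_implies_less)
  moreover have "i \<le> crit a K + a K"
  proof (cases "K = N")
    case True
    then show ?thesis using crit_last_block[of N a] assms by simp
  next
    case False
    then have "i < crit a (Suc K)"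
      using K K_max[of "Suc K"] by fastforce
    then show ?thesis using crit_Suc[of K a] K by simp
  qed
  ultimately show ?thesis using K unfolding stable_block_def by auto
qed

lemma employee_cases:
  assumes "1 \<le> N" "i \<in> {1..nemp N a}"
  obtains "i = nemp N a"
    | k where "k \<in> {1..N}" "i = crit a k"
    | k where "k \<in> {1..N}" "i \<in> stable_block a k"
proof -
  consider "i = nemp N a" | "i \<in> crit a ` {1..N}" | "1 \<le> i" "i < nemp N a" "i \<notin> crit a ` {1..N}"
    using assms(2) by force
  then show ?thesis
    using in_stable_block_if_not_crit[OF assms(1)] that by cases blast+
qed

lemma resp_nemp: "resp N a (nemp N a) = total N a"
  unfolding resp_def by simp

lemma resp_crit: "k \<in> {1..N} \<Longrightarrow> resp N a (crit a k) = (\<Sum>j=1..k. a j)"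
proof -
  assume k: "k \<in> {1..N}"
  have "(THE k'. k' \<in> {1..N} \<and> crit a k = crit a k') = k"
    using k inj_onD[OF inj_on_crit[of a N]] by (intro the_equality) auto
  then show ?thesis
    using k crit_less_nemp[OF k, of a] unfolding resp_def by auto
qed

lemma resp_stable_block:
  "k \<in> {1..N} \<Longrightarrow> i \<in> stable_block a k \<Longrightarrow> resp N a i = (\<Sum>j=1..<k. a j)"
proof -
  assume k: "k \<in> {1..N}" and i: "i \<in> stable_block a k"
  have "(THE k'. k' \<in> {1..N} \<and> i \<in> stable_block a k') = k"
    using k i stable_block_unique[of k _ i a] by (intro the_equality) auto
  moreover have "\<not> (\<exists>k'\<in>{1..N}. i = crit a k')"
    using stable_block_not_crit[of k _ i a] k i by auto
  ultimately show ?thesis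
    using stable_block_less_nemp[OF k i] unfolding resp_def by auto
qed

lemma resp_stable_block_le:
  assumes N: "1 \<le> N" and k: "k \<in> {1..N}" "i \<in> stable_block a k"
    and j: "j \<in> {1..nemp N a}" "i < j"
  shows "resp N a i \<le> resp N a j"
proof -
  have "(\<Sum>j=1..<k. a j) \<le> resp N a j"
    using N j
  proof (cases rule: employee_cases)
    case 1
    have "(\<Sum>j=1..<k. a j) \<le> (\<Sum>j=1..N. a j)"
      using k by (intro sum_mono2) auto
    then show ?thesis
      using 1 by (simp add: resp_nemp total_def)
  next
    case (2 k')
    have "k < k'"
      using k j 2 crit_mono[of k' k a] unfolding stable_block_def by (cases "k < k'") auto
    then have "(\<Sum>j=1..<k. a j) \<le> (\<Sum>j=1..k'. a j)"
      by (intro sum_mono2) auto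
    then show ?thesis
      using resp_crit[OF 2(1), of a] 2(2) by simp
  next
    case (3 k')
    have "k \<le> k'"
      using k j 3 crit_block_less_crit[of k' k a] unfolding stable_block_def by (cases "k \<le> k'") auto
    then show ?thesis
      using resp_stable_block[OF 3] by (simp add: sum_mono2)
  qed
  then show ?thesis using resp_stable_block[OF k] by simp
qed

lemma bumps_eq_0_iff:
  "bumps N a s i = 0 \<longleftrightarrow> (\<forall>j\<in>{1..nemp N a}. i < j \<longrightarrow> etime N a s i \<le> etime N a s j)"
  unfolding bumps_def by (auto simp: not_less)

lemma bumps_non_crit:
  assumes N: "1 \<le> N" and f: "feasible N a W s"
    and i: "i \<in> {1..nemp N a}" "i \<notin> crit a ` {1..N}"
  shows "bumps N a s i = 0"
  unfolding bumps_eq_0_iff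
proof (intro ballI impI)
  fix j assume j: "j \<in> {1..nemp N a}" "i < j"
  then have "i \<noteq> nemp N a" by auto
  with N i obtain k where k: "k \<in> {1..N}" "i \<in> stable_block a k"
    by (cases rule: employee_cases) auto
  have "s i \<le> s j"
    using f i j unfolding feasible_def by auto
  then show "etime N a s i \<le> etime N a s j"
    using resp_stable_block_le[OF N k j] unfolding etime_def by simp
qed

theorem corollary3:
  fixes N W :: nat and a :: "nat \<Rightarrow> nat" and s :: "nat \<Rightarrow> real"
  assumes "N \<ge> 1"
    and "\<forall>j\<in>{1..N}. a j > 0"
    and "W > 0" and "W \<le> total N a"
    and "feasible N a W s"
  shows "total_bumps N a s = (\<Sum>k=1..N. bumps N a s (crit a k))"
proof -
  have crit_range: "crit a ` {1..N} \<subseteq> {1..nemp N a}"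
  proof (rule image_subsetI)
    fix k assume "k \<in> {1..N}"
    then show "crit a k \<in> {1..nemp N a}"
      using crit_less_nemp[of k N a] crit_ge[of k a] by auto
  qed
  have "total_bumps N a s = (\<Sum>i\<in>crit a ` {1..N}. bumps N a s i)"
    unfolding total_bumps_def
    using bumps_non_crit[OF assms(1,5)] by (intro sum.mono_neutral_right[OF _ crit_range]) auto
  also have "\<dots> = (\<Sum>k=1..N. bumps N a s (crit a k))"
    by (rule sum.reindex[OF inj_on_crit, unfolded comp_def])
  finally show ?thesis .
qed

end
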